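(* Let $c_1,c_2$ be arbitrary real constants and $\varepsilon,\delta\in\{1,-1\}$. Each of the following functions is an exact solution of the equation $u_t+(u_x+u_{xx})^2=0$ on $\mathbb{R}^2$: (1) $u=c_1+c_2e^{-x}$; (2) $u=c_1-\varepsilon(x+\varepsilon t)+4\delta c_2e^{-\frac12(x+\varepsilon t)}+\varepsilon c_2^2e^{-(x+\varepsilon t)}$; (3) $u=c_1+4\delta e^{-\frac x2}-(t+c_2)e^{-x}$; (4) $u=c_1+c_2e^{-x}+\delta x-t$; (5) $u=c_1+\varepsilon t+\frac{1}{2k}\left(\delta\sqrt{1-4\varepsilon k^2}-1\right)\left(x+\frac1k t\right)$, where $k\neq 0$ if $\varepsilon=-1$, and $0<|k|\le\frac12$ if $\varepsilon=1$. *)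

theory Defs
  imports "HOL-Analysis.Analysis"
begin

definition dx :: "(real \<Rightarrow> real \<Rightarrow> real) \<Rightarrow> real \<Rightarrow> real \<Rightarrow> real" where
  "dx u x t = deriv (\<lambda>y. u y t) x"

definition dt :: "(real \<Rightarrow> real \<Rightarrow> real) \<Rightarrow> real \<Rightarrow> real \<Rightarrow> real" where
  "dt u x t = deriv (\<lambda>s. u x s) t"

definition solves_pde :: "(real \<Rightarrow> real \<Rightarrow> real) \<Rightarrow> bool" where
  "solves_pde u \<longleftrightarrow>
     (\<forall>x t. (\<lambda>s. u x s) differentiable (at t)
          \<and> (\<lambda>y. u y t) differentiable (at x)
          \<and> (\<lambda>y. dx u y t) differentiable (at x)
          \<and> dt u x t + (dx u x t + dx (dx u) x t)^2 = 0)"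

end

theory Submission
  imports Defs "HOL-Library.Quadratic_Discriminant"
begin

text \<open>
  The operator u \<mapsto> u_x + u_xx annihilates e^(-x), so adding c e^(-x) to a solution yields
  a solution. An affine function c + a x + b t is a solution iff b + a^2 = 0; together with the
  first remark this gives (1) and (4), and taking for a a root of k a^2 + a + \<epsilon> k = 0 gives (5).
  A travelling wave w(x + v t) is a solution iff v w' + (w' + w'')^2 = 0; for (2) one finds
  w' + w'' = -\<epsilon> - \<delta> c2 e^(-\<xi>/2), whose square cancels \<epsilon> w'. Solution (3) with c2 = 0
  is checked directly.
\<close>

lemma solves_pdeI:
  assumes fx: "\<And>x t. ((\<lambda>y. u y t) has_real_derivative f x t) (at x)"
    and gx: "\<And>x t. ((\<lambda>y. f y t) has_real_derivative g x t) (at x)"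
    and ht: "\<And>x t. ((\<lambda>s. u x s) has_real_derivative h x t) (at t)"
    and eq: "\<And>x t. h x t + (f x t + g x t)^2 = 0"
  shows "solves_pde u"
proof -
  have "dx u = f" using fx by (auto simp: dx_def fun_eq_iff intro!: DERIV_imp_deriv)
  moreover have "dx f = g" using gx by (auto simp: dx_def fun_eq_iff intro!: DERIV_imp_deriv)
  moreover have "dt u = h" using ht by (auto simp: dt_def fun_eq_iff intro!: DERIV_imp_deriv)
  ultimately show ?thesis unfolding solves_pde_def
    using fx gx ht eq real_differentiable_def by metis
qed

lemma solves_pde_add_exp_neg:
  assumes "solves_pde u"
  shows "solves_pde (\<lambda>x t. u x t + c * exp (- x))"
proof (rule solves_pdeI[where f = "\<lambda>x t. dx u x t - c * exp (- x)"
      and g = "\<lambda>x t. dx (dx u) x t + c * exp (- x)" and h = "dt u"])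
  fix x t
  have ux: "((\<lambda>y. u y t) has_real_derivative dx u x t) (at x)"
    and ux': "((\<lambda>y. dx u y t) has_real_derivative dx (dx u) x t) (at x)"
    and ut: "((\<lambda>s. u x s) has_real_derivative dt u x t) (at t)"
    and eq: "dt u x t + (dx u x t + dx (dx u) x t)^2 = 0"
    using assms by (auto simp: solves_pde_def dx_def dt_def DERIV_deriv_iff_real_differentiable)
  show "((\<lambda>y. u y t + c * exp (- y)) has_real_derivative dx u x t - c * exp (- x)) (at x)"
    using ux by (auto intro!: derivative_eq_intros)
  show "((\<lambda>y. dx u y t - c * exp (- y)) has_real_derivative dx (dx u) x t + c * exp (- x)) (at x)"
    using ux' by (auto intro!: derivative_eq_intros)
  show "((\<lambda>s. u x s + c * exp (- x)) has_real_derivative dt u x t) (at t)"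
    using ut by (auto intro!: derivative_eq_intros)
  show "dt u x t + (dx u x t - c * exp (- x) + (dx (dx u) x t + c * exp (- x)))^2 = 0"
    using eq by simp
qed

lemma solves_pde_affine:
  assumes "b + a^2 = 0"
  shows "solves_pde (\<lambda>x t. c + a * x + b * t)"
  by (rule solves_pdeI[where f = "\<lambda>x t. a" and g = "\<lambda>x t. 0" and h = "\<lambda>x t. b"])
     (use assms in \<open>auto intro!: derivative_eq_intros\<close>)

lemma solves_pde_travelling_wave:
  assumes w: "\<And>\<xi>. (w has_real_derivative w' \<xi>) (at \<xi>)"
    and w': "\<And>\<xi>. (w' has_real_derivative w'' \<xi>) (at \<xi>)"
    and ode: "\<And>\<xi>. v * w' \<xi> + (w' \<xi> + w'' \<xi>)^2 = 0"
  shows "solves_pde (\<lambda>x t. w (x + v * t))"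
proof (rule solves_pdeI[where f = "\<lambda>x t. w' (x + v * t)"
      and g = "\<lambda>x t. w'' (x + v * t)" and h = "\<lambda>x t. v * w' (x + v * t)"])
  fix x t
  have shift: "((\<lambda>y. y + v * t) has_real_derivative 1) (at x)"
    and scale: "((\<lambda>s. x + v * s) has_real_derivative v) (at t)"
    by (auto intro!: derivative_eq_intros)
  show "((\<lambda>y. w (y + v * t)) has_real_derivative w' (x + v * t)) (at x)"
    using DERIV_chain2[OF w shift] by simp
  show "((\<lambda>y. w' (y + v * t)) has_real_derivative w'' (x + v * t)) (at x)"
    using DERIV_chain2[OF w' shift] by simp
  show "((\<lambda>s. w (x + v * s)) has_real_derivative v * w' (x + v * t)) (at t)"
    using DERIV_chain2[OF w scale] by (simp add: mult.commute)
  show "v * w' (x + v * t) + (w' (x + v * t) + w'' (x + v * t))^2 = 0"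
    by (rule ode)
qed

lemma solves_pde_const_plus_exp_neg: "solves_pde (\<lambda>x t. c1 + c2 * exp (- x))"
  using solves_pde_add_exp_neg[OF solves_pde_affine[of 0 0 c1], of c2] by simp

lemma solves_pde_affine_plus_exp_neg:
  assumes "\<delta>\<^sup>2 = 1"
  shows "solves_pde (\<lambda>x t. c1 + c2 * exp (- x) + \<delta> * x - t)"
proof -
  have "solves_pde (\<lambda>x t. (c1 + \<delta> * x + (-1) * t) + c2 * exp (- x))"
    by (intro solves_pde_add_exp_neg solves_pde_affine) (simp add: assms)
  then show ?thesis by (simp add: algebra_simps)
qed

lemma solves_pde_exp_half_wave:
  assumes "\<epsilon>\<^sup>2 = 1" and "\<delta>\<^sup>2 = 1"
  shows "solves_pde (\<lambda>x t. c1 - \<epsilon> * (x + \<epsilon> * t) + 4 * \<delta> * c2 * exp (- (x + \<epsilon> * t) / 2)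
                       + \<epsilon> * c2^2 * exp (- (x + \<epsilon> * t)))"
proof (rule solves_pde_travelling_wave)
  fix \<xi> :: real
  show "((\<lambda>\<xi>. c1 - \<epsilon> * \<xi> + 4 * \<delta> * c2 * exp (- \<xi> / 2) + \<epsilon> * c2^2 * exp (- \<xi>)) has_real_derivative
      - \<epsilon> - 2 * \<delta> * c2 * exp (- \<xi> / 2) - \<epsilon> * c2^2 * exp (- \<xi>)) (at \<xi>)"
    by (auto intro!: derivative_eq_intros simp: algebra_simps)
  show "((\<lambda>\<xi>. - \<epsilon> - 2 * \<delta> * c2 * exp (- \<xi> / 2) - \<epsilon> * c2^2 * exp (- \<xi>)) has_real_derivative
      \<delta> * c2 * exp (- \<xi> / 2) + \<epsilon> * c2^2 * exp (- \<xi>)) (at \<xi>)"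
    by (auto intro!: derivative_eq_intros simp: algebra_simps)
  have "exp (- \<xi>) = exp (- \<xi> / 2)^2"
    by (simp add: exp_double[symmetric])
  then show "\<epsilon> * (- \<epsilon> - 2 * \<delta> * c2 * exp (- \<xi> / 2) - \<epsilon> * c2^2 * exp (- \<xi>))
      + (- \<epsilon> - 2 * \<delta> * c2 * exp (- \<xi> / 2) - \<epsilon> * c2^2 * exp (- \<xi>)
         + (\<delta> * c2 * exp (- \<xi> / 2) + \<epsilon> * c2^2 * exp (- \<xi>)))^2 = 0"
    using assms by (simp add: power2_eq_square algebra_simps)
qed

lemma solves_pde_exp_half_minus_t_exp:
  assumes "\<delta>\<^sup>2 = 1"
  shows "solves_pde (\<lambda>x t. c1 + 4 * \<delta> * exp (- x / 2) - (t + c2) * exp (- x))"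
proof -
  have "solves_pde (\<lambda>x t. c1 + 4 * \<delta> * exp (- x / 2) - t * exp (- x))"
  proof (rule solves_pdeI[where f = "\<lambda>x t. - 2 * \<delta> * exp (- x / 2) + t * exp (- x)"
        and g = "\<lambda>x t. \<delta> * exp (- x / 2) - t * exp (- x)" and h = "\<lambda>x t. - exp (- x)"])
    fix x t :: real
    show "((\<lambda>y. c1 + 4 * \<delta> * exp (- y / 2) - t * exp (- y)) has_real_derivative
        - 2 * \<delta> * exp (- x / 2) + t * exp (- x)) (at x)"
      by (auto intro!: derivative_eq_intros simp: algebra_simps)
    show "((\<lambda>y. - 2 * \<delta> * exp (- y / 2) + t * exp (- y)) has_real_derivative
        \<delta> * exp (- x / 2) - t * exp (- x)) (at x)"
      by (auto intro!: derivative_eq_intros simp: algebra_simps)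
    show "((\<lambda>s. c1 + 4 * \<delta> * exp (- x / 2) - s * exp (- x)) has_real_derivative - exp (- x)) (at t)"
      by (auto intro!: derivative_eq_intros)
    have "exp (- x) = exp (- x / 2)^2"
      by (simp add: exp_double[symmetric])
    then show "- exp (- x) + (- 2 * \<delta> * exp (- x / 2) + t * exp (- x)
        + (\<delta> * exp (- x / 2) - t * exp (- x)))^2 = 0"
      using assms by (simp add: power2_eq_square algebra_simps)
  qed
  from solves_pde_add_exp_neg[OF this, of "- c2"] show ?thesis
    by (simp add: algebra_simps)
qed

lemma solves_pde_plane_wave_quadratic_root:
  assumes "k \<noteq> 0" and "0 \<le> 1 - 4 * \<epsilon> * k\<^sup>2" and "\<delta>\<^sup>2 = 1"
  shows "solves_pde (\<lambda>x t. c1 + \<epsilon> * t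
            + (1 / (2 * k)) * (\<delta> * sqrt (1 - 4 * \<epsilon> * k^2) - 1) * (x + t / k))"
proof -
  define a where "a = (1 / (2 * k)) * (\<delta> * sqrt (1 - 4 * \<epsilon> * k^2) - 1)"
  have discrim: "discrim k 1 (\<epsilon> * k) = 1 - 4 * \<epsilon> * k\<^sup>2"
    by (simp add: discrim_def power2_eq_square)
  have "\<delta> = 1 \<or> \<delta> = -1"
    using assms(3) by (simp add: power2_eq_1_iff)
  then have "k * a\<^sup>2 + 1 * a + \<epsilon> * k = 0"
    using discriminant_nonneg[of k 1 "\<epsilon> * k" a] assms(1,2) unfolding discrim
    by (auto simp: a_def field_simps)
  then have "(\<epsilon> + a / k) + a\<^sup>2 = 0"
    using assms(1) by (simp add: field_simps power2_eq_square)
  from solves_pde_affine[OF this, of c1] show ?thesis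
    unfolding a_def[symmetric] using assms(1) by (simp add: field_simps)
qed

lemma wave_number_conditions_discrim_nonneg:
  fixes k \<epsilon> :: real
  assumes "(\<epsilon> = -1 \<and> k \<noteq> 0) \<or> (\<epsilon> = 1 \<and> 0 < \<bar>k\<bar> \<and> \<bar>k\<bar> \<le> 1/2)"
  shows "k \<noteq> 0" and "0 \<le> 1 - 4 * \<epsilon> * k\<^sup>2"
proof -
  show "k \<noteq> 0"
    using assms by auto
  show "0 \<le> 1 - 4 * \<epsilon> * k\<^sup>2"
    using assms
  proof (elim disjE conjE)
    assume "\<epsilon> = 1" and "\<bar>k\<bar> \<le> 1/2"
    then show ?thesis
      using abs_le_square_iff[of k "1/2"] by (simp add: power_divide)
  qed (simp add: add_nonneg_nonneg)
qed

theorem mainTheorem4: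
  fixes c1 c2 \<epsilon> \<delta> :: real
  assumes "\<epsilon> \<in> {1, -1}" and "\<delta> \<in> {1, -1}"
  shows "solves_pde (\<lambda>x t. c1 + c2 * exp (- x))
    \<and> solves_pde (\<lambda>x t. c1 - \<epsilon> * (x + \<epsilon> * t) + 4 * \<delta> * c2 * exp (- (x + \<epsilon> * t) / 2)
                       + \<epsilon> * c2^2 * exp (- (x + \<epsilon> * t)))
    \<and> solves_pde (\<lambda>x t. c1 + 4 * \<delta> * exp (- x / 2) - (t + c2) * exp (- x))
    \<and> solves_pde (\<lambda>x t. c1 + c2 * exp (- x) + \<delta> * x - t)
    \<and> (\<forall>k::real. ((\<epsilon> = -1 \<and> k \<noteq> 0) \<or> (\<epsilon> = 1 \<and> 0 < \<bar>k\<bar> \<and> \<bar>k\<bar> \<le> 1/2)) \<longrightarrow>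
         solves_pde (\<lambda>x t. c1 + \<epsilon> * t
            + (1 / (2 * k)) * (\<delta> * sqrt (1 - 4 * \<epsilon> * k^2) - 1) * (x + t / k)))"
proof -
  have \<epsilon>: "\<epsilon>\<^sup>2 = 1" and \<delta>: "\<delta>\<^sup>2 = 1"
    using assms by auto
  show ?thesis
    using solves_pde_const_plus_exp_neg solves_pde_exp_half_wave[OF \<epsilon> \<delta>]
      solves_pde_exp_half_minus_t_exp[OF \<delta>] solves_pde_affine_plus_exp_neg[OF \<delta>]
      solves_pde_plane_wave_quadratic_root[OF _ _ \<delta>] wave_number_conditions_discrim_nonneg
    by blast
qed

end
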